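(* Let $G$ be a graph with vertices $a,b,c,d$. When the Laplacian $L$ of $G$ is used as Hamiltonian, there is no perfect state transfer between $e_a+e_b$ and $e_c-e_d$; that is, there are no $t\ge 0$ and $\gamma\in\mathbb{C}$ with $|\gamma|=1$ such that $\exp(itL)(e_a+e_b)=\gamma(e_c-e_d)$ or $\exp(itL)(e_c-e_d)=\gamma(e_a+e_b)$.
   Context: $L=\Delta-A$ where $\Delta$ is the degree matrix and $A$ the adjacency matrix of $G$; $e_v$ is the standard basis vector of vertex $v$. *)

theory Defs
  imports "HOL-Analysis.Analysis"
begin

definition simple_graph :: "('n::finite \<Rightarrow> 'n \<Rightarrow> bool) \<Rightarrow> bool" where
  "simple_graph E \<longleftrightarrow> (\<forall>u v. E u v \<longrightarrow> E v u) \<and> (\<forall>v. \<not> E v v)"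

definition laplacian :: "('n::finite \<Rightarrow> 'n \<Rightarrow> bool) \<Rightarrow> complex^'n^'n" where
  "laplacian E = (\<chi> i j. (if i = j then of_nat (card {k. E i k}) else 0) - (if E i j then 1 else 0))"

fun matpow :: "complex^'n::finite^'n \<Rightarrow> nat \<Rightarrow> complex^'n^'n" where
  "matpow A 0 = mat 1"
| "matpow A (Suc k) = A ** matpow A k"

definition mat_exp :: "complex^'n::finite^'n \<Rightarrow> complex^'n^'n" where
  "mat_exp A = (\<Sum>k. inverse (fact k) *\<^sub>R matpow A k)"

definition basis_vec :: "'n::finite \<Rightarrow> complex^'n" where
  "basis_vec v = axis v 1"

end

theory Submission
  imports Defs
begin

text \<open>The coordinate sum \<open>\<one>\<^sup>T x\<close> is conserved by the walk: a Laplacian has zero column sums,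
  so \<open>\<one>\<^sup>T L = 0\<close> and hence \<open>\<one>\<^sup>T exp(itL) = \<one>\<^sup>T\<close> term by term in the exponential series.
  But \<open>e\<^sub>a + e\<^sub>b\<close> has coordinate sum 2, while every multiple of \<open>e\<^sub>c - e\<^sub>d\<close> has coordinate
  sum 0.\<close>

definition mat_l1_norm :: "complex^'n::finite^'m::finite \<Rightarrow> real" where
  "mat_l1_norm X = (\<Sum>i\<in>UNIV. \<Sum>j\<in>UNIV. cmod (X $ i $ j))"

lemma norm_vec_le_sum_norm: "norm (x::'a::real_normed_vector^'n::finite) \<le> (\<Sum>i\<in>UNIV. norm (x $ i))"
  unfolding norm_vec_def by (rule L2_set_le_sum) auto

lemma mat_l1_norm_nonneg: "mat_l1_norm X \<ge> 0"
  unfolding mat_l1_norm_def by (intro sum_nonneg) auto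

lemma norm_le_mat_l1_norm: "norm X \<le> mat_l1_norm X"
proof -
  have "norm X \<le> (\<Sum>i\<in>UNIV. norm (X $ i))" by (rule norm_vec_le_sum_norm)
  also have "\<dots> \<le> mat_l1_norm X"
    unfolding mat_l1_norm_def by (intro sum_mono norm_vec_le_sum_norm)
  finally show ?thesis .
qed

lemma mat_l1_norm_row_le: "(\<Sum>j\<in>UNIV. cmod (Y $ k $ j)) \<le> mat_l1_norm Y"
  unfolding mat_l1_norm_def by (rule member_le_sum) (auto intro: sum_nonneg)

lemma mat_l1_norm_mult:
  fixes X :: "complex^'k::finite^'m::finite" and Y :: "complex^'n::finite^'k"
  shows "mat_l1_norm (X ** Y) \<le> mat_l1_norm X * mat_l1_norm Y"
proof -
  have "mat_l1_norm (X ** Y) = (\<Sum>i\<in>UNIV. \<Sum>j\<in>UNIV. cmod (\<Sum>k\<in>UNIV. X $ i $ k * Y $ k $ j))"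
    unfolding mat_l1_norm_def matrix_matrix_mult_def by simp
  also have "\<dots> \<le> (\<Sum>i\<in>UNIV. \<Sum>j\<in>UNIV. \<Sum>k\<in>UNIV. cmod (X $ i $ k) * cmod (Y $ k $ j))"
    by (intro sum_mono order_trans[OF norm_sum]) (simp add: norm_mult)
  also have "\<dots> = (\<Sum>i\<in>UNIV. \<Sum>k\<in>UNIV. cmod (X $ i $ k) * (\<Sum>j\<in>UNIV. cmod (Y $ k $ j)))"
    by (rule sum.cong[OF refl], subst sum.swap) (simp add: sum_distrib_left)
  also have "\<dots> \<le> (\<Sum>i\<in>UNIV. \<Sum>k\<in>UNIV. cmod (X $ i $ k) * mat_l1_norm Y)"
    by (intro sum_mono mult_left_mono mat_l1_norm_row_le) auto
  also have "\<dots> = mat_l1_norm X * mat_l1_norm Y"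
    by (simp add: mat_l1_norm_def sum_distrib_right)
  finally show ?thesis .
qed

lemma mat_l1_norm_matpow:
  fixes A :: "complex^'n::finite^'n"
  shows "mat_l1_norm (matpow A k) \<le> mat_l1_norm (mat 1 :: complex^'n::finite^'n) * mat_l1_norm A ^ k"
proof (induction k)
  case 0
  then show ?case by simp
next
  case (Suc k)
  have "mat_l1_norm (matpow A (Suc k)) \<le> mat_l1_norm A * mat_l1_norm (matpow A k)"
    by (simp add: mat_l1_norm_mult)
  also have "\<dots> \<le> mat_l1_norm A * (mat_l1_norm (mat 1 :: complex^'n^'n) * mat_l1_norm A ^ k)"
    using Suc mat_l1_norm_nonneg by (intro mult_left_mono) auto
  finally show ?case by (simp add: algebra_simps)
qed

lemma summable_mat_exp: "summable (\<lambda>k. inverse (fact k) *\<^sub>R matpow (A::complex^'n::finite^'n) k)"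
proof (rule summable_comparison_test)
  let ?C = "mat_l1_norm (mat 1 :: complex^'n^'n)"
  show "summable (\<lambda>k. ?C * (inverse (fact k) * mat_l1_norm A ^ k))"
    by (intro summable_mult summable_exp)
  have "norm (inverse (fact k) *\<^sub>R matpow A k) \<le> ?C * (inverse (fact k) * mat_l1_norm A ^ k)" for k
  proof -
    have "norm (inverse (fact k) *\<^sub>R matpow A k) = inverse (fact k) * norm (matpow A k)"
      by simp
    also have "\<dots> \<le> inverse (fact k) * (?C * mat_l1_norm A ^ k)"
      by (intro mult_left_mono order_trans[OF norm_le_mat_l1_norm mat_l1_norm_matpow]) auto
    finally show ?thesis by (simp add: algebra_simps)
  qed
  then show "\<exists>N. \<forall>k\<ge>N. norm (inverse (fact k) *\<^sub>R matpow A k) \<le> ?C * (inverse (fact k) * mat_l1_norm A ^ k)"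
    by blast
qed

definition vec_sum :: "'a::comm_monoid_add^'n::finite \<Rightarrow> 'a" where
  "vec_sum v = (\<Sum>i\<in>UNIV. v $ i)"

lemma vec_sum_add: "vec_sum (x + y) = vec_sum x + vec_sum y"
  and vec_sum_diff: "vec_sum (x - y) = vec_sum x - vec_sum (y::'a::ab_group_add^'n::finite)"
  and vec_sum_scale: "vec_sum (c *s z) = c * vec_sum (z::'b::comm_ring^'n)"
  unfolding vec_sum_def by (simp_all add: sum.distrib sum_subtractf sum_distrib_left)

lemma vec_sum_basis_vec: "vec_sum (basis_vec v) = 1"
  unfolding vec_sum_def basis_vec_def axis_def by simp

lemma vec_sum_mat_mult: "vec_sum (mat c *v v) = c * vec_sum (v::'a::comm_ring_1^'n::finite)"
proof -
  have "mat c *v v = c *s v"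
    by (simp add: vec_eq_iff matrix_vector_mult_def mat_def if_distrib[of "\<lambda>x. x * _"] cong: if_cong)
  then show ?thesis by (simp add: vec_sum_scale)
qed

lemma bounded_linear_vec_sum_matrix_vector_mult:
  "bounded_linear (\<lambda>X::complex^'n::finite^'m::finite. vec_sum (X *v v))"
  unfolding vec_sum_def matrix_vector_mult_def vec_lambda_beta
  by (intro bounded_linear_sum bounded_linear_compose[OF bounded_linear_mult_left]
      bounded_linear_compose[OF bounded_linear_vec_nth bounded_linear_vec_nth])

lemma vec_sum_mat_exp:
  fixes M :: "complex^'n::finite^'n"
  assumes "\<And>w. vec_sum (M *v w) = 0"
  shows "vec_sum (mat_exp M *v v) = vec_sum v"
proof -
  let ?term = "\<lambda>k. inverse (fact k) *\<^sub>R matpow M k"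
  interpret \<phi>: bounded_linear "\<lambda>X::complex^'n^'n. vec_sum (X *v v)"
    by (rule bounded_linear_vec_sum_matrix_vector_mult)
  have "(\<lambda>k. vec_sum (?term k *v v)) sums vec_sum (mat_exp M *v v)"
    unfolding mat_exp_def by (intro \<phi>.sums summable_sums summable_mat_exp)
  moreover have "vec_sum (?term k *v v) = (if k = 0 then vec_sum v else 0)" for k
    using \<phi>.scaleR[of "inverse (fact k)" "matpow M k"]
    by (cases k) (simp_all add: matrix_vector_mul_assoc[symmetric] vec_sum_mat_mult assms)
  then have "(\<lambda>k. vec_sum (?term k *v v)) sums vec_sum v"
    using sums_single[of 0 "\<lambda>_. vec_sum v"] by simp
  ultimately show ?thesis by (rule sums_unique2)
qed

lemma vec_sum_laplacian:
  assumes "simple_graph E"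
  shows "vec_sum (laplacian E *v v) = 0"
proof -
  have column_sum: "(\<Sum>i\<in>UNIV. laplacian E $ i $ j) = 0" for j
  proof -
    have "{i. E i j} = {k. E j k}"
      using assms unfolding simple_graph_def by auto
    then show ?thesis
      unfolding laplacian_def by (simp add: sum_subtractf sum.If_cases)
  qed
  have "vec_sum (laplacian E *v v) = (\<Sum>j\<in>UNIV. (\<Sum>i\<in>UNIV. laplacian E $ i $ j) * v $ j)"
    unfolding vec_sum_def matrix_vector_mult_def
    by (simp add: sum_distrib_right) (rule sum.swap)
  then show ?thesis by (simp add: column_sum)
qed

lemma vec_sum_mat_exp_laplacian:
  assumes "simple_graph E"
  shows "vec_sum (mat_exp (mat c ** laplacian E) *v v) = vec_sum v"
  by (rule vec_sum_mat_exp)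
    (simp add: matrix_vector_mul_assoc[symmetric] vec_sum_mat_mult vec_sum_laplacian[OF assms])

theorem mainTheorem8:
  fixes E :: "'n::finite \<Rightarrow> 'n \<Rightarrow> bool" and a b c d :: 'n
  assumes "simple_graph E" and "a \<noteq> b" and "c \<noteq> d"
  shows "\<not> (\<exists>t::real. \<exists>\<gamma>::complex. t \<ge> 0 \<and> cmod \<gamma> = 1 \<and>
     (mat_exp (mat (\<i> * complex_of_real t) ** laplacian E) *v (basis_vec a + basis_vec b)
        = \<gamma> *s (basis_vec c - basis_vec d)
      \<or> mat_exp (mat (\<i> * complex_of_real t) ** laplacian E) *v (basis_vec c - basis_vec d)
        = \<gamma> *s (basis_vec a + basis_vec b)))"
proof clarify
  fix t :: real and \<gamma> :: complex
  let ?U = "mat_exp (mat (\<i> * complex_of_real t) ** laplacian E)"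
  assume "cmod \<gamma> = 1"
    and transfer: "?U *v (basis_vec a + basis_vec b) = \<gamma> *s (basis_vec c - basis_vec d)
      \<or> ?U *v (basis_vec c - basis_vec d) = \<gamma> *s (basis_vec a + basis_vec b)"
  have conserved: "vec_sum (?U *v x) = vec_sum x" for x
    by (rule vec_sum_mat_exp_laplacian[OF assms(1)])
  have pair: "vec_sum (basis_vec a + basis_vec b) = 2"
    and difference: "vec_sum (basis_vec c - basis_vec d) = 0"
    by (simp_all add: vec_sum_add vec_sum_diff vec_sum_basis_vec)
  from transfer show False
  proof
    assume "?U *v (basis_vec a + basis_vec b) = \<gamma> *s (basis_vec c - basis_vec d)"
    then have "vec_sum (basis_vec a + basis_vec b) = \<gamma> * vec_sum (basis_vec c - basis_vec d)"
      by (metis conserved vec_sum_scale)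
    with pair difference show False by simp
  next
    assume "?U *v (basis_vec c - basis_vec d) = \<gamma> *s (basis_vec a + basis_vec b)"
    then have "vec_sum (basis_vec c - basis_vec d) = \<gamma> * vec_sum (basis_vec a + basis_vec b)"
      by (metis conserved vec_sum_scale)
    with pair difference \<open>cmod \<gamma> = 1\<close> show False by auto
  qed
qed

end
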